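(* Let $D$ be a discrete semigroup such that for some $c\in D$ the set $D_c=\{(x,y)\in D\times D:xy=c\}$ is infinite, and let $\pi:D\to M$ be a homomorphism into a Hausdorff topological semigroup $M$. If $S=D\cup_\pi M$ is a topological semigroup, then $D_c$ is an open-and-closed discrete subspace of $S\times S$, and consequently $S\times S$ is not pseudocompact.
   Context: For a discrete space $D$: if $D$ is infinite, $\alpha D=D\cup\{\infty\}$ is its one-point compactification; if $D$ is finite, $\alpha D$ is the topological sum of $D$ and an isolated point $\infty\notin D$. For a map $\pi:D\to M$, $D\cup_\pi M$ is the subspace $\{(x,\pi(x)):x\in D\}\cup(\{\infty\}\times M)$ of $\alpha D\times M$, with $D$ identified with $\{(x,\pi(x))\}$ and $M$ with $\{\infty\}\times M$. It carries the semigroup operation extending those of $D$ and $M$ by $xy=\pi(x)y$ for $x\in D,y\in M$ and $xy=x\pi(y)$ for $x\in M,y\in D$. A space is pseudocompact if every locally finite open cover is finite. *)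

theory Defs
  imports "HOL-Analysis.Analysis"
begin

text \<open>The space alpha D for a discrete space D (a set of type 'd), realised on 'd option,
  where None plays the role of the point infinity and Some x the point x of D.\<close>

definition alpha_open :: "'d set \<Rightarrow> 'd option set \<Rightarrow> bool" where
  "alpha_open D U \<longleftrightarrow> U \<subseteq> insert None (Some ` D) \<and> (None \<in> U \<longrightarrow> finite (Some ` D - U))"

lemma istopology_alpha_open: "istopology (alpha_open D)"
  unfolding istopology_def alpha_open_def
proof (rule conjI; (intro allI impI)?)
  fix S T assume a: "S \<subseteq> insert None (Some ` D) \<and> (None \<in> S \<longrightarrow> finite (Some ` D - S))"
    "T \<subseteq> insert None (Some ` D) \<and> (None \<in> T \<longrightarrow> finite (Some ` D - T))"
  show "S \<inter> T \<subseteq> insert None (Some ` D) \<and> (None \<in> S \<inter> T \<longrightarrow> finite (Some ` D - S \<inter> T))"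
  proof (intro conjI impI)
    show "S \<inter> T \<subseteq> insert None (Some ` D)" using a by blast
  next
    assume "None \<in> S \<inter> T"
    then have "finite ((Some ` D - S) \<union> (Some ` D - T))" using a by auto
    moreover have "Some ` D - S \<inter> T = (Some ` D - S) \<union> (Some ` D - T)" by blast
    ultimately show "finite (Some ` D - S \<inter> T)" by simp
  qed
next
  fix K assume a: "\<forall>S\<in>K. S \<subseteq> insert None (Some ` D) \<and> (None \<in> S \<longrightarrow> finite (Some ` D - S))"
  show "\<Union> K \<subseteq> insert None (Some ` D) \<and> (None \<in> \<Union> K \<longrightarrow> finite (Some ` D - \<Union> K))"
  proof (intro conjI impI)
    show "\<Union> K \<subseteq> insert None (Some ` D)" using a by blast
  next
    assume "None \<in> \<Union> K"
    then obtain S where "S \<in> K" "None \<in> S" by blast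
    then have "finite (Some ` D - S)" using a by blast
    moreover have "Some ` D - \<Union> K \<subseteq> Some ` D - S" using \<open>S \<in> K\<close> by blast
    ultimately show "finite (Some ` D - \<Union> K)" by (rule finite_subset[rotated])
  qed
qed

text \<open>alpha D: one-point compactification of the discrete space D if D is infinite,
  the topological sum of the discrete D and an isolated point if D is finite.\<close>
definition alphaD :: "'d set \<Rightarrow> 'd option topology" where
  "alphaD D = (if infinite D then topology (alpha_open D)
               else discrete_topology (insert None (Some ` D)))"

text \<open>Carrier of the space D \<union>_pi M inside alpha D \<times> M.\<close>
definition glued_carrier :: "'d set \<Rightarrow> ('d \<Rightarrow> 'm) \<Rightarrow> 'm topology \<Rightarrow> ('d option \<times> 'm) set" where
  "glued_carrier D \<pi> M = {(Some x, \<pi> x) | x. x \<in> D} \<union> ({None} \<times> topspace M)"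

definition glued_topology :: "'d set \<Rightarrow> ('d \<Rightarrow> 'm) \<Rightarrow> 'm topology \<Rightarrow> ('d option \<times> 'm) topology" where
  "glued_topology D \<pi> M = subtopology (prod_topology (alphaD D) M) (glued_carrier D \<pi> M)"

fun glued_mult :: "('d \<Rightarrow> 'd \<Rightarrow> 'd) \<Rightarrow> ('m \<Rightarrow> 'm \<Rightarrow> 'm) \<Rightarrow> ('d \<Rightarrow> 'm)
     \<Rightarrow> ('d option \<times> 'm) \<Rightarrow> ('d option \<times> 'm) \<Rightarrow> ('d option \<times> 'm)" where
  "glued_mult mD mM \<pi> (Some x, _) (Some y, _) = (Some (mD x y), \<pi> (mD x y))"
| "glued_mult mD mM \<pi> (Some x, _) (None, q) = (None, mM (\<pi> x) q)"
| "glued_mult mD mM \<pi> (None, p) (Some y, _) = (None, mM p (\<pi> y))"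
| "glued_mult mD mM \<pi> (None, p) (None, q) = (None, mM p q)"

definition pseudocompact_space :: "'a topology \<Rightarrow> bool" where
  "pseudocompact_space X \<longleftrightarrow>
     (\<forall>\<U>. (\<forall>U\<in>\<U>. openin X U) \<and> \<Union>\<U> = topspace X \<and> locally_finite_in X \<U> \<longrightarrow> finite \<U>)"

end

theory Submission
  imports Defs
begin

(* Write S = D \<union>_pi M and X = S \<times> S.
   Every point x of D is isolated and closed in alpha D, hence {x} is clopen in S, so each
   point (x, y) of D_c is isolated in X.  A set consisting of isolated points is open and
   carries the discrete subspace topology.  Closedness of D_c is where the semigroup
   structure enters: for points of S, s t = c holds exactly when s, t \<in> D and s t = c in D,
   so D_c is the preimage of the closed point c under the continuous multiplication.
   Finally, an infinite closed set of isolated points A yields the locally finite open cover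
   {X - A} \<union> {{p} | p \<in> A}, which is infinite; so X is not pseudocompact. *)

lemma isolated_points_open_discrete:
  assumes "A \<subseteq> topspace X" and isolated: "\<And>p. p \<in> A \<Longrightarrow> openin X {p}"
  shows "openin X A" "subtopology X A = discrete_topology A"
proof -
  show "openin X A"
    using isolated by (subst openin_subopen) blast
  show "subtopology X A = discrete_topology A"
    unfolding eq_commute[of "subtopology X A"] discrete_topology_unique
    using assms by (auto simp: openin_subtopology)
qed

text \<open>An infinite closed set of isolated points obstructs pseudocompactness: the singletons
  together with the open complement form an infinite locally finite open cover.\<close>
lemma not_pseudocompact_if_infinite_closed_isolated:
  assumes closed: "closedin X A" and isolated: "\<And>p. p \<in> A \<Longrightarrow> openin X {p}"
    and inf: "infinite A"
  shows "\<not> pseudocompact_space X"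
proof
  assume pc: "pseudocompact_space X"
  have A_sub: "A \<subseteq> topspace X" using closed by (rule closedin_subset)
  have compl_open: "openin X (topspace X - A)" using closed by blast
  define \<U> where "\<U> = insert (topspace X - A) ((\<lambda>p. {p}) ` A)"
  have open_cover: "\<forall>U\<in>\<U>. openin X U" "\<Union>\<U> = topspace X"
    unfolding \<U>_def using isolated compl_open A_sub by auto
  have "locally_finite_in X \<U>"
    unfolding locally_finite_in_def
  proof (intro conjI ballI)
    show "\<Union>\<U> \<subseteq> topspace X" using open_cover(2) by simp
    fix x assume x: "x \<in> topspace X"
    show "\<exists>V. openin X V \<and> x \<in> V \<and> finite {W \<in> \<U>. W \<inter> V \<noteq> {}}"
    proof (cases "x \<in> A")
      case True
      have "{W \<in> \<U>. W \<inter> {x} \<noteq> {}} \<subseteq> {{x}}" unfolding \<U>_def using True by auto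
      then show ?thesis using isolated[OF True] finite_subset by blast
    next
      case False
      have "{W \<in> \<U>. W \<inter> (topspace X - A) \<noteq> {}} \<subseteq> {topspace X - A}" unfolding \<U>_def by auto
      then show ?thesis using False x compl_open finite_subset by blast
    qed
  qed
  then have "finite \<U>" using pc open_cover unfolding pseudocompact_space_def by blast
  then have "finite ((\<lambda>p. {p}) ` A)" unfolding \<U>_def by simp
  then have "finite A" by (rule finite_imageD) (auto simp: inj_on_def)
  with inf show False by simp
qed

lemma topspace_alphaD: "topspace (alphaD D) = insert None (Some ` D)"
proof (cases "infinite D")
  case True
  have "alpha_open D (insert None (Some ` D))" by (auto simp: alpha_open_def)
  moreover have "\<And>U. alpha_open D U \<Longrightarrow> U \<subseteq> insert None (Some ` D)"
    by (auto simp: alpha_open_def)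
  ultimately show ?thesis using True
    by (auto simp: alphaD_def topspace_def istopology_alpha_open)
qed (auto simp: alphaD_def)

text \<open>Points of D are isolated and closed in alpha D (only infinity is a limit point).\<close>
lemma alphaD_singleton_clopen:
  assumes "x \<in> D"
  shows "openin (alphaD D) {Some x}" "closedin (alphaD D) {Some x}"
proof -
  show "openin (alphaD D) {Some x}"
    using assms by (auto simp: alphaD_def istopology_alpha_open alpha_open_def)
  have "openin (alphaD D) (insert None (Some ` D) - {Some x})"
  proof (cases "infinite D")
    case True
    have "Some ` D - (insert None (Some ` D) - {Some x}) \<subseteq> {Some x}" by auto
    then have "finite (Some ` D - (insert None (Some ` D) - {Some x}))"
      using finite_subset by blast
    then show ?thesis using True by (auto simp: alphaD_def istopology_alpha_open alpha_open_def)
  qed (auto simp: alphaD_def)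
  then show "closedin (alphaD D) {Some x}"
    using assms by (auto simp: closedin_def topspace_alphaD)
qed

lemma topspace_glued:
  assumes "\<And>x. x \<in> D \<Longrightarrow> \<pi> x \<in> topspace M"
  shows "topspace (glued_topology D \<pi> M) = glued_carrier D \<pi> M"
  using assms by (auto simp: glued_topology_def glued_carrier_def topspace_alphaD)

text \<open>Consequently every point of D is clopen in D \<union>_pi M: it is the trace of the clopen
  strip {x} \<times> M.\<close>
lemma glued_singleton_clopen:
  assumes "x \<in> D" and \<pi>_maps: "\<And>x. x \<in> D \<Longrightarrow> \<pi> x \<in> topspace M"
  shows "openin (glued_topology D \<pi> M) {(Some x, \<pi> x)}"
    "closedin (glued_topology D \<pi> M) {(Some x, \<pi> x)}"
proof -
  have trace: "{(Some x, \<pi> x)} = ({Some x} \<times> topspace M) \<inter> glued_carrier D \<pi> M"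
    using assms by (auto simp: glued_carrier_def)
  have "openin (prod_topology (alphaD D) M) ({Some x} \<times> topspace M)"
    using alphaD_singleton_clopen[OF assms(1)] by (simp add: openin_prod_Times_iff)
  then show "openin (glued_topology D \<pi> M) {(Some x, \<pi> x)}"
    unfolding glued_topology_def openin_subtopology using trace by blast
  have "closedin (prod_topology (alphaD D) M) ({Some x} \<times> topspace M)"
    using alphaD_singleton_clopen[OF assms(1)] by (simp add: closedin_prod_Times_iff)
  then show "closedin (glued_topology D \<pi> M) {(Some x, \<pi> x)}"
    unfolding glued_topology_def closedin_subtopology using trace by blast
qed

lemma glued_pair_isolated:
  assumes "x \<in> D" "y \<in> D" and \<pi>_maps: "\<And>x. x \<in> D \<Longrightarrow> \<pi> x \<in> topspace M"
  shows "openin (prod_topology (glued_topology D \<pi> M) (glued_topology D \<pi> M))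
           {((Some x, \<pi> x), (Some y, \<pi> y))}"
proof -
  have "openin (prod_topology (glued_topology D \<pi> M) (glued_topology D \<pi> M))
          ({(Some x, \<pi> x)} \<times> {(Some y, \<pi> y)})"
    unfolding openin_prod_Times_iff
    using glued_singleton_clopen(1)[where \<pi>=\<pi> and M=M, OF assms(1) \<pi>_maps]
      glued_singleton_clopen(1)[where \<pi>=\<pi> and M=M, OF assms(2) \<pi>_maps]
    by blast
  then show ?thesis by simp
qed

text \<open>A product in D \<union>_pi M lands at a point of D only when both factors lie in D:
  a factor from M forces the product into M.  So D_c is exactly the fibre over c.\<close>
lemma glued_mult_fibre:
  "{z \<in> glued_carrier D \<pi> M \<times> glued_carrier D \<pi> M.
      (\<lambda>(s, t). glued_mult mD mM \<pi> s t) z \<in> {(Some c, \<pi> c)}}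
   = {((Some x, \<pi> x), (Some y, \<pi> y)) | x y. x \<in> D \<and> y \<in> D \<and> mD x y = c}"
    (is "?fibre = ?Dc")
proof
  show "?Dc \<subseteq> ?fibre" by (auto simp: glued_carrier_def)
next
  show "?fibre \<subseteq> ?Dc"
  proof
    fix z assume z: "z \<in> ?fibre"
    obtain a b a' b' where z_eq: "z = ((a, b), (a', b'))" by (metis prod.exhaust)
    have carrier: "(a, b) \<in> glued_carrier D \<pi> M" "(a', b') \<in> glued_carrier D \<pi> M"
      and prod: "glued_mult mD mM \<pi> (a, b) (a', b') = (Some c, \<pi> c)"
      using z z_eq by auto
    obtain x y where "a = Some x" "a' = Some y"
      using prod by (cases a; cases a') auto
    with carrier prod show "z \<in> ?Dc"
      unfolding z_eq by (auto simp: glued_carrier_def)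
  qed
qed

theorem corollary3p3:
  fixes D :: "'d set" and mD :: "'d \<Rightarrow> 'd \<Rightarrow> 'd" and c :: 'd
    and M :: "'m topology" and mM :: "'m \<Rightarrow> 'm \<Rightarrow> 'm" and \<pi> :: "'d \<Rightarrow> 'm"
  assumes D_closed: "\<And>x y. x \<in> D \<Longrightarrow> y \<in> D \<Longrightarrow> mD x y \<in> D"
    and D_assoc: "\<And>x y z. x \<in> D \<Longrightarrow> y \<in> D \<Longrightarrow> z \<in> D \<Longrightarrow> mD (mD x y) z = mD x (mD y z)"
    and c_in: "c \<in> D"
    and Dc_inf: "infinite {(x, y). x \<in> D \<and> y \<in> D \<and> mD x y = c}"
    and M_Hausdorff: "Hausdorff_space M"
    and M_closed: "\<And>p q. p \<in> topspace M \<Longrightarrow> q \<in> topspace M \<Longrightarrow> mM p q \<in> topspace M"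
    and M_assoc: "\<And>p q r. p \<in> topspace M \<Longrightarrow> q \<in> topspace M \<Longrightarrow> r \<in> topspace M \<Longrightarrow>
                    mM (mM p q) r = mM p (mM q r)"
    and M_cont: "continuous_map (prod_topology M M) M (\<lambda>(p, q). mM p q)"
    and \<pi>_maps: "\<And>x. x \<in> D \<Longrightarrow> \<pi> x \<in> topspace M"
    and \<pi>_hom: "\<And>x y. x \<in> D \<Longrightarrow> y \<in> D \<Longrightarrow> \<pi> (mD x y) = mM (\<pi> x) (\<pi> y)"
    and S_topsg: "continuous_map (prod_topology (glued_topology D \<pi> M) (glued_topology D \<pi> M))
                    (glued_topology D \<pi> M) (\<lambda>(s, t). glued_mult mD mM \<pi> s t)"
  shows "(let S = glued_topology D \<pi> M;
              Dc = {((Some x, \<pi> x), (Some y, \<pi> y)) | x y. x \<in> D \<and> y \<in> D \<and> mD x y = c}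
          in openin (prod_topology S S) Dc \<and> closedin (prod_topology S S) Dc
             \<and> subtopology (prod_topology S S) Dc = discrete_topology Dc
             \<and> \<not> pseudocompact_space (prod_topology S S))"
proof -
  define S where "S = glued_topology D \<pi> M"
  define Dc where "Dc = {((Some x, \<pi> x), (Some y, \<pi> y)) | x y. x \<in> D \<and> y \<in> D \<and> mD x y = c}"
  have isolated: "openin (prod_topology S S) {p}" if p_Dc: "p \<in> Dc" for p
  proof -
    obtain x y where "p = ((Some x, \<pi> x), (Some y, \<pi> y))" "x \<in> D" "y \<in> D"
      using p_Dc unfolding Dc_def by blast
    then show ?thesis unfolding S_def using glued_pair_isolated[OF _ _ \<pi>_maps] by simp
  qed
  have "topspace (prod_topology S S) = glued_carrier D \<pi> M \<times> glued_carrier D \<pi> M"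
    by (simp add: S_def topspace_glued[OF \<pi>_maps])
  then have fibre: "Dc = {z \<in> topspace (prod_topology S S).
                          (\<lambda>(s, t). glued_mult mD mM \<pi> s t) z \<in> {(Some c, \<pi> c)}}"
    by (simp only: Dc_def glued_mult_fibre)
  have closed: "closedin (prod_topology S S) Dc"
    unfolding fibre
    by (rule closedin_continuous_map_preimage[OF S_topsg[folded S_def]])
      (simp add: S_def glued_singleton_clopen(2)[where \<pi>=\<pi> and M=M, OF c_in \<pi>_maps])
  have "Dc = (\<lambda>(x, y). ((Some x, \<pi> x), (Some y, \<pi> y))) ` {(x, y). x \<in> D \<and> y \<in> D \<and> mD x y = c}"
    unfolding Dc_def by auto
  moreover have "inj_on (\<lambda>(x, y). ((Some x, \<pi> x), (Some y, \<pi> y))) A" for A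
    by (auto simp: inj_on_def)
  ultimately have "infinite Dc" using Dc_inf finite_imageD by (metis (no_types, lifting))
  with isolated_points_open_discrete[OF closedin_subset[OF closed] isolated] closed
    not_pseudocompact_if_infinite_closed_isolated[OF closed isolated]
  show ?thesis
    unfolding Let_def S_def[symmetric] Dc_def[symmetric] by simp
qed

end
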